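(* Let $X\subseteq\mathbb R^n$ be convex and compact, let $\phi_1,\dots,\phi_m:\mathbb R^n\to\mathbb R$ be convex, let $y\in\mathbb R^n$, $\gamma>0$, and consider $$\min_{u\in X}\ \tfrac1{2\gamma}\|u-y\|^2\quad\text{s.t.}\quad\phi_i(u)\le0,\ i=1,\dots,m,$$ with optimal solution $x^*$. Let $x^\circ\in X$ be strictly feasible, i.e., $\phi_i(x^\circ)<0$ for all $i$. Let $\hat x$ be an $\epsilon$-suboptimal and $\epsilon$-infeasible solution, i.e., $\hat x\in X$, $\big|\frac1{2\gamma}\|\hat x-y\|^2-\frac1{2\gamma}\|x^*-y\|^2\big|\le\epsilon$ and $[\phi_i(\hat x)]_+\le\epsilon$ for all $i$. Let $\kappa=\max_i\frac{[\phi_i(\hat x)]_+}{[\phi_i(\hat x)]_+-\phi_i(x^\circ)}$ and $\tilde x=\kappa x^\circ+(1-\kappa)\hat x$. Then $\tilde x$ is feasible for the problem, and $\tilde x$ is an $\mathcal O(\epsilon)$-approximate solution in the sense that, with $h=\mathbb I_\Theta$ and $\Theta=\{x\in X:\phi_i(x)\le0\ \forall i\}$, $$\tfrac1{2\gamma}\|\tilde x-y\|^2+h(\tilde x)\le\rho+\min_{x\in\mathbb R^n}\Big\{\tfrac1{2\gamma}\|x-y\|^2+h(x)\Big\}\quad\text{with }\rho=\mathcal O(\epsilon).$$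
   Context: $[a]_+=\max\{0,a\}$. $\mathbb I_\Theta$ is the indicator function of $\Theta$: $\mathbb I_\Theta(x)=0$ if $x\in\Theta$ and $+\infty$ otherwise. *)

theory Defs
  imports "HOL-Analysis.Analysis"
begin

definition pos_part :: "real \<Rightarrow> real" where
  "pos_part a = max 0 a"

definition ind_fun :: "'a set \<Rightarrow> 'a \<Rightarrow> ereal" where
  "ind_fun S x = (if x \<in> S then 0 else \<infinity>)"

definition feas_set :: "'a set \<Rightarrow> (nat \<Rightarrow> 'a \<Rightarrow> real) \<Rightarrow> nat \<Rightarrow> 'a set" where
  "feas_set X \<phi> m = {x \<in> X. \<forall>i\<in>{1..m}. \<phi> i x \<le> 0}"

end

theory Submission
  imports Defs
begin

text \<open>Since \<open>\<phi> i xo < 0\<close>, convexity shows that moving \<open>xh\<close> towards \<open>xo\<close> by the fraction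
  \<open>pos_part (\<phi> i xh) / (pos_part (\<phi> i xh) - \<phi> i xo)\<close> removes the violation of the \<open>i\<close>-th
  constraint, so the largest of these fractions, \<open>\<kappa>\<close>, makes \<open>xt\<close> feasible. Each fraction is at
  most \<open>\<epsilon> / min\<^sub>i (- \<phi> i xo)\<close>, hence \<open>\<kappa> = O(\<epsilon>)\<close> and \<open>\<parallel>xt - xh\<parallel> = O(\<epsilon>)\<close>. On the bounded set
  \<open>X\<close> the objective is Lipschitz, so its value at \<open>xt\<close> exceeds that at \<open>xh\<close> by \<open>O(\<epsilon>)\<close>, and the
  value at \<open>xh\<close> is within \<open>\<epsilon>\<close> of the optimum, which is the infimum of the objective plus the
  indicator of the feasible set.\<close>

lemma pos_part_nonneg: "0 \<le> pos_part a"
  by (simp add: pos_part_def)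

lemma shrink_ratio_bounds:
  assumes "c < 0"
  shows "0 \<le> pos_part a / (pos_part a - c)"
    and "pos_part a / (pos_part a - c) < 1"
    and "pos_part a / (pos_part a - c) \<le> pos_part a / - c"
proof -
  have den: "pos_part a - c > 0"
    using pos_part_nonneg[of a] assms by linarith
  then show "0 \<le> pos_part a / (pos_part a - c)"
    using pos_part_nonneg by simp
  show "pos_part a / (pos_part a - c) < 1"
    using den assms by simp
  show "pos_part a / (pos_part a - c) \<le> pos_part a / - c"
    using pos_part_nonneg[of a] assms by (intro divide_left_mono) (auto intro: mult_pos_neg)
qed

lemma Max_shrink_ratio_bounds:
  fixes a c :: "'i \<Rightarrow> real"
  assumes "finite I" "I \<noteq> {}" "\<forall>i\<in>I. c i < 0"
  defines "\<kappa> \<equiv> Max ((\<lambda>i. pos_part (a i) / (pos_part (a i) - c i)) ` I)"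
  shows "0 \<le> \<kappa>" and "\<kappa> < 1"
    and "\<forall>i\<in>I. pos_part (a i) \<le> \<epsilon> \<Longrightarrow> \<kappa> \<le> \<epsilon> / Min ((\<lambda>i. - c i) ` I)"
proof -
  let ?k = "\<lambda>i. pos_part (a i) / (pos_part (a i) - c i)"
  have "\<kappa> \<in> ?k ` I"
    unfolding \<kappa>_def using assms(1,2) by (intro Max_in) auto
  then obtain j where j: "j \<in> I" "\<kappa> = ?k j"
    by blast
  show "0 \<le> \<kappa>" "\<kappa> < 1"
    using shrink_ratio_bounds(1,2)[of "c j" "a j"] assms(3) j by auto
  assume "\<forall>i\<in>I. pos_part (a i) \<le> \<epsilon>"
  moreover have "Min ((\<lambda>i. - c i) ` I) > 0" "Min ((\<lambda>i. - c i) ` I) \<le> - c j"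
    using assms(1-3) j(1) by simp_all
  ultimately have "pos_part (a j) / - c j \<le> \<epsilon> / Min ((\<lambda>i. - c i) ` I)"
    using j(1) pos_part_nonneg[of "a j"] by (intro frac_le) auto
  then show "\<kappa> \<le> \<epsilon> / Min ((\<lambda>i. - c i) ` I)"
    using shrink_ratio_bounds(3)[of "c j" "a j"] assms(3) j by auto
qed

lemma convex_on_shrink_nonpos:
  assumes f: "convex_on A f" and "xo \<in> A" "xh \<in> A" "f xo < 0"
    and \<kappa>: "pos_part (f xh) / (pos_part (f xh) - f xo) \<le> \<kappa>" "\<kappa> \<le> 1"
  shows "f (\<kappa> *\<^sub>R xo + (1 - \<kappa>) *\<^sub>R xh) \<le> 0"
proof -
  have "0 \<le> \<kappa>"
    using shrink_ratio_bounds(1)[OF \<open>f xo < 0\<close>, of "f xh"] \<kappa>(1) by linarith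
  then have "f (\<kappa> *\<^sub>R xo + (1 - \<kappa>) *\<^sub>R xh) \<le> \<kappa> * f xo + (1 - \<kappa>) * f xh"
    using convex_onD[OF f, of \<kappa> xh xo] assms(2,3) \<kappa>(2) by (simp add: add.commute)
  also have "\<dots> \<le> 0"
  proof (cases "f xh \<le> 0")
    case True
    then show ?thesis
      using \<open>0 \<le> \<kappa>\<close> \<kappa>(2) \<open>f xo < 0\<close>
      by (intro add_nonpos_nonpos mult_nonneg_nonpos) auto
  next
    case False
    then have "f xh / (f xh - f xo) \<le> \<kappa>"
      using \<kappa>(1) by (simp add: pos_part_def)
    then have "f xh \<le> \<kappa> * (f xh - f xo)"
      using False \<open>f xo < 0\<close> by (simp add: divide_le_eq)
    then show ?thesis
      by (simp add: algebra_simps)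
  qed
  finally show ?thesis .
qed

lemma norm_shrink_diff_le:
  assumes "bounded X" "xo \<in> X" "xh \<in> X" "0 \<le> \<kappa>" "\<kappa> \<le> t"
  shows "norm (\<kappa> *\<^sub>R xo + (1 - \<kappa>) *\<^sub>R xh - xh) \<le> t * diameter X"
proof -
  have "norm (\<kappa> *\<^sub>R xo + (1 - \<kappa>) *\<^sub>R xh - xh) = \<kappa> * norm (xo - xh)"
    using assms(4) by (simp add: algebra_simps flip: scaleR_diff_right)
  also have "\<dots> \<le> t * diameter X"
    using assms diameter_bounded_bound[OF assms(1-3)]
    by (intro mult_mono) (auto simp: dist_norm)
  finally show ?thesis .
qed

lemma slater_correction:
  assumes "convex X" "bounded X" "xo \<in> X" "xh \<in> X" "finite I" "I \<noteq> {}"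
    and "\<forall>i\<in>I. convex_on X (\<phi> i)" "\<forall>i\<in>I. \<phi> i xo < 0" "\<forall>i\<in>I. pos_part (\<phi> i xh) \<le> \<epsilon>"
  defines "\<kappa> \<equiv> Max ((\<lambda>i. pos_part (\<phi> i xh) / (pos_part (\<phi> i xh) - \<phi> i xo)) ` I)"
  shows "\<kappa> *\<^sub>R xo + (1 - \<kappa>) *\<^sub>R xh \<in> {x \<in> X. \<forall>i\<in>I. \<phi> i x \<le> 0}"
    and "norm (\<kappa> *\<^sub>R xo + (1 - \<kappa>) *\<^sub>R xh - xh) \<le> \<epsilon> / Min ((\<lambda>i. - \<phi> i xo) ` I) * diameter X"
proof -
  have \<kappa>: "0 \<le> \<kappa>" "\<kappa> < 1" "\<kappa> \<le> \<epsilon> / Min ((\<lambda>i. - \<phi> i xo) ` I)"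
    using Max_shrink_ratio_bounds[of I "\<lambda>i. \<phi> i xo" "\<lambda>i. \<phi> i xh"] assms(5,6,8,9)
    unfolding \<kappa>_def by auto
  have "\<kappa> *\<^sub>R xo + (1 - \<kappa>) *\<^sub>R xh \<in> X"
    using convexD[OF assms(1,3,4)] \<kappa>(1,2) by simp
  moreover have "\<phi> i (\<kappa> *\<^sub>R xo + (1 - \<kappa>) *\<^sub>R xh) \<le> 0" if "i \<in> I" for i
    using that assms(3,4,5,7,8) \<kappa>(2) unfolding \<kappa>_def
    by (intro convex_on_shrink_nonpos[where A = X]) auto
  ultimately show "\<kappa> *\<^sub>R xo + (1 - \<kappa>) *\<^sub>R xh \<in> {x \<in> X. \<forall>i\<in>I. \<phi> i x \<le> 0}"
    by blast
  show "norm (\<kappa> *\<^sub>R xo + (1 - \<kappa>) *\<^sub>R xh - xh) \<le> \<epsilon> / Min ((\<lambda>i. - \<phi> i xo) ` I) * diameter X"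
    using norm_shrink_diff_le[OF assms(2-4) \<kappa>(1,3)] .
qed

lemma power2_norm_diff_le:
  fixes a b y :: "'a::real_normed_vector"
  shows "norm (a - y)^2 - norm (b - y)^2 \<le> norm (a - b) * (norm (a - y) + norm (b - y))"
proof -
  have "norm (a - y)^2 - norm (b - y)^2
      = (norm (a - y) - norm (b - y)) * (norm (a - y) + norm (b - y))"
    by (simp add: power2_eq_square algebra_simps)
  also have "\<dots> \<le> norm (a - b) * (norm (a - y) + norm (b - y))"
    using norm_triangle_ineq2[of "a - y" "b - y"] by (intro mult_right_mono) auto
  finally show ?thesis .
qed

lemma bounded_scaled_power2_dist_Lipschitz:
  fixes y :: "'a::real_normed_vector"
  assumes "bounded X" "0 \<le> c"
  obtains L where "0 \<le> L"
    and "\<And>a b. a \<in> X \<Longrightarrow> b \<in> X \<Longrightarrow> c * norm (a - y)^2 - c * norm (b - y)^2 \<le> L * norm (a - b)"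
proof -
  obtain R where R: "\<And>x. x \<in> X \<Longrightarrow> norm x \<le> R"
    using assms(1) by (auto simp: bounded_iff)
  define D where "D = \<bar>R\<bar> + norm y"
  have D: "norm (x - y) \<le> D" if "x \<in> X" for x
    using R[OF that] norm_triangle_ineq4[of x y] unfolding D_def by linarith
  have "c * norm (a - y)^2 - c * norm (b - y)^2 \<le> c * (2 * D) * norm (a - b)" if "a \<in> X" "b \<in> X" for a b
  proof -
    have "norm (a - y)^2 - norm (b - y)^2 \<le> norm (a - b) * (norm (a - y) + norm (b - y))"
      by (rule power2_norm_diff_le)
    also have "\<dots> \<le> norm (a - b) * (2 * D)"
      using D[OF that(1)] D[OF that(2)] by (intro mult_left_mono) auto
    finally have "c * (norm (a - y)^2 - norm (b - y)^2) \<le> c * (norm (a - b) * (2 * D))"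
      using assms(2) by (rule mult_left_mono)
    then show ?thesis
      by (simp add: right_diff_distrib mult_ac)
  qed
  moreover have "0 \<le> c * (2 * D)"
    unfolding D_def using assms(2) by simp
  ultimately show thesis
    using that by blast
qed

lemma INF_plus_ind_fun_eq_minimum:
  assumes "x0 \<in> S" "\<And>u. u \<in> S \<Longrightarrow> f x0 \<le> f u"
  shows "(INF x. ereal (f x) + ind_fun S x) = ereal (f x0)"
proof (rule antisym)
  show "(INF x. ereal (f x) + ind_fun S x) \<le> ereal (f x0)"
    using INF_lower[OF UNIV_I, of "\<lambda>x. ereal (f x) + ind_fun S x" x0] assms(1)
    by (simp add: ind_fun_def)
  show "ereal (f x0) \<le> (INF x. ereal (f x) + ind_fun S x)"
    using assms by (intro INF_greatest) (simp add: ind_fun_def)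
qed

theorem lemma5:
  fixes X :: "'a::euclidean_space set" and \<phi> :: "nat \<Rightarrow> 'a \<Rightarrow> real" and m :: nat
    and y xstar xo :: 'a and \<gamma> :: real
  assumes "convex X" and "compact X"
    and "\<forall>i\<in>{1..m}. convex_on UNIV (\<phi> i)"
    and "m \<ge> 1"
    and "\<gamma> > 0"
    and "xstar \<in> feas_set X \<phi> m"
    and "\<forall>u\<in>feas_set X \<phi> m. 1/(2*\<gamma>) * (norm (xstar - y))^2 \<le> 1/(2*\<gamma>) * (norm (u - y))^2"
    and "xo \<in> X" and "\<forall>i\<in>{1..m}. \<phi> i xo < 0"
  shows "\<exists>C::real. \<forall>\<epsilon>>0. \<forall>xh.
     xh \<in> X
     \<and> \<bar>1/(2*\<gamma>) * (norm (xh - y))^2 - 1/(2*\<gamma>) * (norm (xstar - y))^2\<bar> \<le> \<epsilon>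
     \<and> (\<forall>i\<in>{1..m}. pos_part (\<phi> i xh) \<le> \<epsilon>)
     \<longrightarrow> (let \<kappa> = Max ((\<lambda>i. pos_part (\<phi> i xh) / (pos_part (\<phi> i xh) - \<phi> i xo)) ` {1..m});
              xt = \<kappa> *\<^sub>R xo + (1 - \<kappa>) *\<^sub>R xh
          in xt \<in> feas_set X \<phi> m
             \<and> ereal (1/(2*\<gamma>) * (norm (xt - y))^2) + ind_fun (feas_set X \<phi> m) xt
               \<le> ereal (C * \<epsilon>) + (INF x. ereal (1/(2*\<gamma>) * (norm (x - y))^2) + ind_fun (feas_set X \<phi> m) x))"
proof -
  define f where "f u = 1/(2*\<gamma>) * (norm (u - y))^2" for u
  define \<delta> where "\<delta> = Min ((\<lambda>i. - \<phi> i xo) ` {1..m})"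
  have I: "finite {1..m}" "{1..m} \<noteq> {}"
    using assms(4) by auto
  have convex_on_X: "\<forall>i\<in>{1..m}. convex_on X (\<phi> i)"
    using assms(1,3) by (blast intro: convex_on_subset[OF _ subset_UNIV])
  have bounded: "bounded X"
    using assms(2) by (rule compact_imp_bounded)
  obtain L where L: "0 \<le> L" "\<And>a b. a \<in> X \<Longrightarrow> b \<in> X \<Longrightarrow> f a - f b \<le> L * norm (a - b)"
    using bounded_scaled_power2_dist_Lipschitz[OF bounded, of "1/(2*\<gamma>)" y] assms(5)
    unfolding f_def by auto
  have opt: "(INF x. ereal (f x) + ind_fun (feas_set X \<phi> m) x) = ereal (f xstar)"
    using assms(6,7) unfolding f_def by (intro INF_plus_ind_fun_eq_minimum) auto
  define C where "C = 1 + L * diameter X / \<delta>"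
  show ?thesis (is "\<exists>C. \<forall>\<epsilon>>0. \<forall>xh. ?approx \<epsilon> xh \<longrightarrow> ?corrected C \<epsilon> xh")
  proof (intro exI[of _ C] allI impI)
    fix \<epsilon> :: real and xh
    assume "\<epsilon> > 0" and "?approx \<epsilon> xh"
    then have xh: "xh \<in> X" "\<bar>f xh - f xstar\<bar> \<le> \<epsilon>" "\<forall>i\<in>{1..m}. pos_part (\<phi> i xh) \<le> \<epsilon>"
      unfolding f_def by auto
    define \<kappa> where "\<kappa> = Max ((\<lambda>i. pos_part (\<phi> i xh) / (pos_part (\<phi> i xh) - \<phi> i xo)) ` {1..m})"
    define xt where "xt = \<kappa> *\<^sub>R xo + (1 - \<kappa>) *\<^sub>R xh"
    have feasible: "xt \<in> feas_set X \<phi> m"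
      and close: "norm (xt - xh) \<le> \<epsilon> / \<delta> * diameter X"
      using slater_correction[OF assms(1) bounded assms(8) xh(1) I convex_on_X assms(9) xh(3)]
      unfolding feas_set_def xt_def \<kappa>_def \<delta>_def by simp_all
    have "f xt - f xh \<le> L * norm (xt - xh)"
      using L(2) feasible xh(1) unfolding feas_set_def by blast
    also have "\<dots> \<le> L * (\<epsilon> / \<delta> * diameter X)"
      using close L(1) by (rule mult_left_mono)
    finally have "f xt \<le> f xstar + C * \<epsilon>"
      using xh(2) unfolding C_def by (simp add: algebra_simps)
    then show "?corrected C \<epsilon> xh"
      using feasible unfolding Let_def f_def[symmetric] opt \<kappa>_def[symmetric] xt_def[symmetric]
      by (simp add: ind_fun_def)
  qed
qed

end
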